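(* Let $X$ be a locally compact Polish space and $\{B_i\}_{i\in\mathbb{N}}$ a sequence of experiments in $X$. Let $\mathcal{V}$ be a compact set of continuous functions $X\to\mathbb{R}$ in the topology of uniform convergence on compact sets, and let $\Phi(\mathcal{V})$ be the set of preferences $\succeq_u$ (defined by $x\succeq_u y$ iff $u(x)\ge u(y)$) for $u\in\mathcal{V}$. Suppose every $\succeq\in\Phi(\mathcal{V})$ is locally strict. Let $c$ be a choice sequence and, for each $k$, let $\succeq_k\in\Phi(\mathcal{V})$ weakly rationalize the restriction of $c$ to $\Sigma_k$. Then there is $\succeq^*\in\Phi(\mathcal{V})$ with $\succeq_k\to\succeq^*$ in the topology of closed convergence. Furthermore, if $\succeq'_k\in\Phi(\mathcal{V})$ also weakly rationalizes the restriction of $c$ to $\Sigma_k$ for each $k$, then $\succeq'_k\to\succeq^*$.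
   Context: A preference $\succeq$ is locally strict if for all $x\succeq y$ and every neighborhood $V$ of $(x,y)$ in $X\times X$ there is $(x',y')\in V$ with $x'\succ y'$. A sequence of experiments is a sequence $\{B_i\}$ of unordered pairs $B_i\subseteq X$ such that $B=\bigcup_iB_i$ is dense in $X$ and for all $x,y\in B$ there is $k$ with $B_k=\{x,y\}$; $\Sigma_k=\{B_1,\dots,B_k\}$. A choice sequence is a map $c$ assigning to each $B_i$ a nonempty subset $c(B_i)\subseteq B_i$. With $c_{\succeq}(A)=\{x\in A:x\succeq y\ \forall y\in A\}$, $\succeq$ weakly rationalizes $c$ on $\Sigma_k$ if $c(B_i)\subseteq c_{\succeq}(B_i)$ for all $B_i\in\Sigma_k$. Closed convergence on closed subsets of $X\times X$: $F^n\to F$ iff $F$ equals both the set of points every neighborhood of which meets $F^n$ for all large $n$, and the set of points every neighborhood of which meets $F^n$ for infinitely many $n$. *)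

theory Defs
  imports "HOL-Analysis.Analysis"
begin

text \<open>Topology of uniform convergence on compact sets on the space of continuous
  real functions: generated by the sets of continuous v with |v x - u x| < e on a
  compact set K, for u continuous, K compact, e > 0; then restricted to C(X).\<close>
definition cc_topology :: "('a::topological_space \<Rightarrow> real) topology" where
  "cc_topology = subtopology
     (topology_generated_by
        {{v. \<forall>x\<in>K. \<bar>v x - u x\<bar> < e} | u K e. continuous_on UNIV u \<and> compact K \<and> e > 0})
     {u. continuous_on UNIV u}"

definition pref_of :: "('a \<Rightarrow> real) \<Rightarrow> ('a \<times> 'a) set" where
  "pref_of u = {(x, y). u x \<ge> u y}"

definition Phi :: "('a \<Rightarrow> real) set \<Rightarrow> ('a \<times> 'a) set set" where
  "Phi V = pref_of ` V"

definition strict_pref :: "('a \<times> 'a) set \<Rightarrow> 'a \<Rightarrow> 'a \<Rightarrow> bool" where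
  "strict_pref R x y \<longleftrightarrow> (x, y) \<in> R \<and> (y, x) \<notin> R"

definition locally_strict :: "('a::topological_space \<times> 'a) set \<Rightarrow> bool" where
  "locally_strict R \<longleftrightarrow> (\<forall>x y. (x, y) \<in> R \<longrightarrow>
     (\<forall>W. open W \<and> (x, y) \<in> W \<longrightarrow> (\<exists>(x', y')\<in>W. strict_pref R x' y')))"

definition experiments :: "(nat \<Rightarrow> 'a::topological_space set) \<Rightarrow> bool" where
  "experiments B \<longleftrightarrow> (\<forall>i. \<exists>x y. B i = {x, y}) \<and>
     closure (\<Union>i. B i) = UNIV \<and>
     (\<forall>x\<in>(\<Union>i. B i). \<forall>y\<in>(\<Union>i. B i). \<exists>k. B k = {x, y})"

definition choice_seq :: "(nat \<Rightarrow> 'a set) \<Rightarrow> ('a set \<Rightarrow> 'a set) \<Rightarrow> bool" where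
  "choice_seq B c \<longleftrightarrow> (\<forall>i. c (B i) \<noteq> {} \<and> c (B i) \<subseteq> B i)"

definition choice_by :: "('a \<times> 'a) set \<Rightarrow> 'a set \<Rightarrow> 'a set" where
  "choice_by R A = {x \<in> A. \<forall>y\<in>A. (x, y) \<in> R}"

text \<open>Sigma_k = {B_1,...,B_k}; with 0-based indexing these are B 0, ..., B (k-1).\<close>
definition weakly_rationalizes :: "('a \<times> 'a) set \<Rightarrow> (nat \<Rightarrow> 'a set) \<Rightarrow> ('a set \<Rightarrow> 'a set) \<Rightarrow> nat \<Rightarrow> bool" where
  "weakly_rationalizes R B c k \<longleftrightarrow> (\<forall>i<k. c (B i) \<subseteq> choice_by R (B i))"

definition lower_limit :: "(nat \<Rightarrow> 'b::topological_space set) \<Rightarrow> 'b set" where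
  "lower_limit F = {p. \<forall>U. open U \<and> p \<in> U \<longrightarrow> (\<forall>\<^sub>F n in sequentially. F n \<inter> U \<noteq> {})}"

definition upper_limit :: "(nat \<Rightarrow> 'b::topological_space set) \<Rightarrow> 'b set" where
  "upper_limit F = {p. \<forall>U. open U \<and> p \<in> U \<longrightarrow> (\<exists>\<^sub>F n in sequentially. F n \<inter> U \<noteq> {})}"

definition closed_converges :: "(nat \<Rightarrow> 'b::topological_space set) \<Rightarrow> 'b set \<Rightarrow> bool" where
  "closed_converges F G \<longleftrightarrow> G = lower_limit F \<and> G = upper_limit F"

end

theory Submission
  imports Defs
begin

text \<open>Call a utility in V a full rationalization if it rationalizes every experiment. A utility
  that is not one violates some observed choice, and so do all utilities near it in the topology
  of compact convergence; by compactness of V, the k-th rationalizations therefore eventually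
  enter every open set containing the full rationalizations. With the empty set this shows that
  a full rationalization v exists. All full rationalizations induce the same preference: where
  two of them disagreed, local strictness and density of the experiments would produce an
  experiment on which no choice is consistent with both. Finally, a strict comparison by v
  between compact sets is an open condition on utilities, hence eventually shared by the k-th
  rationalizations; applied to points, and to compact neighbourhoods (local compactness), this
  gives the lower and the upper half of closed convergence to the preference of v.\<close>

definition rationalizes_all :: "(nat \<Rightarrow> 'a set) \<Rightarrow> ('a set \<Rightarrow> 'a set) \<Rightarrow> ('a \<Rightarrow> real) \<Rightarrow> bool" where
  "rationalizes_all B c v \<longleftrightarrow> (\<forall>k. weakly_rationalizes (pref_of v) B c k)"

lemma weakly_rationalizes_pref_ofD:
  assumes "weakly_rationalizes (pref_of v) B c k" "i < k" "a \<in> c (B i)" "b \<in> B i"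
  shows "v b \<le> v a"
  using assms unfolding weakly_rationalizes_def choice_by_def pref_of_def by blast

lemma rationalizes_allD:
  assumes "rationalizes_all B c v" "a \<in> c (B i)" "b \<in> B i"
  shows "v b \<le> v a"
  using assms weakly_rationalizes_pref_ofD[of v B c "Suc i" i a b]
  unfolding rationalizes_all_def by blast

lemma rationalizes_allI:
  assumes "choice_seq B c" "\<And>i a b. a \<in> c (B i) \<Longrightarrow> b \<in> B i \<Longrightarrow> v b \<le> v a"
  shows "rationalizes_all B c v"
  using assms unfolding rationalizes_all_def weakly_rationalizes_def choice_by_def pref_of_def
    choice_seq_def by blast

lemma Phi_seqE:
  assumes "\<forall>k. R k \<in> Phi V"
  obtains u where "\<forall>k. u k \<in> V" "R = (\<lambda>k. pref_of (u k))"
proof -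
  from assms have "\<forall>k. \<exists>v\<in>V. R k = pref_of v" unfolding Phi_def by blast
  then obtain u where "\<forall>k. u k \<in> V \<and> R k = pref_of (u k)" by metis
  then show thesis by (intro that[of u]) auto
qed

lemma strict_pref_pref_of_iff: "strict_pref (pref_of v) x y \<longleftrightarrow> v y < v x"
  unfolding strict_pref_def pref_of_def by auto

lemma experiments_hit_open_pairs:
  assumes "experiments B" "open W" "(x, y) \<in> W"
  obtains k a b where "B k = {a, b}" "(a, b) \<in> W"
proof -
  obtain A1 A2 where A: "open A1" "open A2" "(x, y) \<in> A1 \<times> A2" "A1 \<times> A2 \<subseteq> W"
    using open_prod_elim[OF assms(2,3)] by metis
  have dense: "closure (\<Union>i. B i) = UNIV"
    using assms(1) unfolding experiments_def by blast
  obtain a where "a \<in> (\<Union>i. B i)" "a \<in> A1"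
    using open_Int_closure_eq_empty[OF A(1), of "\<Union>i. B i"] dense A(3) by auto
  moreover obtain b where "b \<in> (\<Union>i. B i)" "b \<in> A2"
    using open_Int_closure_eq_empty[OF A(2), of "\<Union>i. B i"] dense A(3) by auto
  moreover from calculation obtain k where "B k = {a, b}"
    using assms(1) unfolding experiments_def by blast
  ultimately show thesis using that A(4) by blast
qed

lemma rationalizes_all_no_reversal:
  assumes "choice_seq B c" "B k = {a, b}"
    and "rationalizes_all B c v" "rationalizes_all B c w"
  shows "\<not> (v b < v a \<and> w a < w b)"
proof -
  obtain z where z: "z \<in> c (B k)" "z = a \<or> z = b"
    using assms(1,2) unfolding choice_seq_def by blast
  show ?thesis
    using z rationalizes_allD[OF assms(3) z(1)] rationalizes_allD[OF assms(4) z(1)] assms(2)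
    by fastforce
qed

lemma pref_of_subset_if_rationalizes_all:
  fixes B :: "nat \<Rightarrow> 'a::topological_space set"
  assumes "experiments B" "choice_seq B c"
    and v: "continuous_on UNIV v" and w: "continuous_on UNIV w"
    and "rationalizes_all B c v" "rationalizes_all B c w"
    and "locally_strict (pref_of v)"
  shows "pref_of v \<subseteq> pref_of w"
proof (rule subrelI, rule ccontr)
  fix x y assume xy: "(x, y) \<in> pref_of v" "(x, y) \<notin> pref_of w"
  have cont: "continuous_on UNIV (\<lambda>q. f (fst q))" "continuous_on UNIV (\<lambda>q. f (snd q))"
    if "continuous_on UNIV f" for f :: "'a \<Rightarrow> real"
    by (intro continuous_on_compose2[OF that] continuous_intros; simp)+
  have "open {q. w (fst q) < w (snd q)}"
    by (intro open_Collect_less cont w)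
  moreover have "w x < w y" using xy(2) unfolding pref_of_def by auto
  ultimately obtain x' y' where "w x' < w y'" "v y' < v x'"
    using assms(7) xy(1) unfolding locally_strict_def strict_pref_pref_of_iff by fastforce
  moreover have "open ({q. w (fst q) < w (snd q)} \<inter> {q. v (snd q) < v (fst q)})"
    by (intro open_Int open_Collect_less cont v w)
  ultimately obtain k a b where "B k = {a, b}" "w a < w b" "v b < v a"
    by (auto elim: experiments_hit_open_pairs[OF assms(1)])
  then show False
    using rationalizes_all_no_reversal[OF assms(2) _ assms(5,6)] by blast
qed

lemma compact_uniform_gap:
  fixes v :: "'a::topological_space \<Rightarrow> real"
  assumes "compact K" "compact L" "continuous_on UNIV v" "\<forall>a\<in>K. \<forall>b\<in>L. v a < v b"
  obtains e where "e > 0" "\<forall>a\<in>K. \<forall>b\<in>L. v a + e \<le> v b"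
proof (cases "K \<times> L = {}")
  case True
  then show thesis using that[of 1] by auto
next
  case False
  have "continuous_on (K \<times> L) (\<lambda>q. v (snd q) - v (fst q))"
    by (intro continuous_intros continuous_on_compose2[OF assms(3)]) auto
  then obtain q0 where q0: "q0 \<in> K \<times> L"
    and min: "\<forall>q\<in>K \<times> L. v (snd q0) - v (fst q0) \<le> v (snd q) - v (fst q)"
    using continuous_attains_inf[OF compact_Times[OF assms(1,2)] False] by blast
  show thesis
  proof (rule that)
    show "v (snd q0) - v (fst q0) > 0" using q0 assms(4) by auto
    show "\<forall>a\<in>K. \<forall>b\<in>L. v a + (v (snd q0) - v (fst q0)) \<le> v b"
      using min by fastforce
  qed
qed

lemma openin_cc_topology_uniform_nbhd:
  fixes v :: "'a::topological_space \<Rightarrow> real"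
  assumes "continuous_on UNIV v" "compact K" "e > 0"
  shows "openin cc_topology ({w. \<forall>x\<in>K. \<bar>w x - v x\<bar> < e} \<inter> {w. continuous_on UNIV w})"
  unfolding cc_topology_def
  by (intro openin_subtopology_Int topology_generated_by_Basis) (use assms in blast)

lemma openin_cc_topology_less_on_compacts:
  fixes K L :: "'a::topological_space set"
  assumes "compact K" "compact L"
  shows "openin cc_topology {w :: 'a \<Rightarrow> real. continuous_on UNIV w \<and> (\<forall>a\<in>K. \<forall>b\<in>L. w a < w b)}"
    (is "openin _ ?T")
proof (subst openin_subopen, intro ballI)
  fix v assume "v \<in> ?T"
  then have v: "continuous_on UNIV v" "\<forall>a\<in>K. \<forall>b\<in>L. v a < v b" by auto
  obtain e where e: "e > 0" "\<forall>a\<in>K. \<forall>b\<in>L. v a + e \<le> v b"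
    using compact_uniform_gap[OF assms v] by blast
  define N where "N = {w. \<forall>x\<in>K \<union> L. \<bar>w x - v x\<bar> < e / 2} \<inter> {w. continuous_on UNIV w}"
  have "openin cc_topology N"
    unfolding N_def using e(1) assms by (intro openin_cc_topology_uniform_nbhd v) auto
  moreover have "v \<in> N" unfolding N_def using v e by auto
  moreover have "N \<subseteq> ?T"
  proof safe
    fix w a b assume "w \<in> N" "a \<in> K" "b \<in> L"
    then have "\<bar>w a - v a\<bar> < e / 2" "\<bar>w b - v b\<bar> < e / 2" "v a + e \<le> v b"
      using e unfolding N_def by auto
    then show "w a < w b" by linarith
  qed (auto simp: N_def)
  ultimately show "\<exists>N. openin cc_topology N \<and> v \<in> N \<and> N \<subseteq> ?T" by blast
qed

lemma refuting_nbhd: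
  fixes v :: "'a::topological_space \<Rightarrow> real"
  assumes "choice_seq B c" "continuous_on UNIV v" "\<not> rationalizes_all B c v"
  obtains N i where "openin cc_topology N" "v \<in> N"
    "\<forall>w\<in>N. \<forall>k>i. \<not> weakly_rationalizes (pref_of w) B c k"
proof -
  obtain i a b where "a \<in> c (B i)" "b \<in> B i" "v a < v b"
    using rationalizes_allI[OF assms(1), of v] assms(3) by (meson not_le)
  let ?N = "{w. continuous_on UNIV w \<and> (\<forall>a'\<in>{a}. \<forall>b'\<in>{b}. w a' < w b')}"
  show thesis
  proof (rule that[of ?N i])
    show "openin cc_topology ?N" by (intro openin_cc_topology_less_on_compacts) auto
    show "v \<in> ?N" using assms(2) \<open>v a < v b\<close> by auto
    show "\<forall>w\<in>?N. \<forall>k>i. \<not> weakly_rationalizes (pref_of w) B c k"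
      using weakly_rationalizes_pref_ofD \<open>a \<in> c (B i)\<close> \<open>b \<in> B i\<close> by fastforce
  qed
qed

lemma locally_compact_nbhd_in_closed:
  fixes x :: "'a::topological_space"
  assumes "locally_compact_space (euclidean :: 'a topology)"
    and "open W" "x \<in> W" "W \<subseteq> C" "closed C"
  obtains U K where "open U" "compact K" "x \<in> U" "U \<subseteq> K" "K \<subseteq> C"
proof -
  obtain U K where "open U" "compact K" "x \<in> U" "U \<subseteq> K"
    using assms(1) unfolding locally_compact_space_def
    by (metis UNIV_I compactin_euclidean_iff open_openin topspace_euclidean)
  then show thesis
    using that[of "U \<inter> W" "K \<inter> C"] assms(2-5) by blast
qed

lemma lower_limit_subset_upper_limit: "lower_limit F \<subseteq> upper_limit F"
  unfolding lower_limit_def upper_limit_def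
  using eventually_frequently[OF trivial_limit_sequentially] by auto

lemma closed_convergesI:
  assumes "G \<subseteq> lower_limit F" "upper_limit F \<subseteq> G"
  shows "closed_converges F G"
  using assms lower_limit_subset_upper_limit[of F] unfolding closed_converges_def by blast

locale choice_experiments =
  fixes B :: "nat \<Rightarrow> 'a::topological_space set"
    and c :: "'a set \<Rightarrow> 'a set"
    and V :: "('a \<Rightarrow> real) set"
  assumes experiments_B: "experiments B"
    and choice_seq_c: "choice_seq B c"
    and V_continuous: "V \<subseteq> {u. continuous_on UNIV u}"
    and V_compact: "compactin cc_topology V"
    and V_locally_strict: "\<forall>P\<in>Phi V. locally_strict P"
begin

lemma rationalizes_all_pref_of_eq:
  assumes "v \<in> V" "w \<in> V" "rationalizes_all B c v" "rationalizes_all B c w"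
  shows "pref_of v = pref_of w"
  using assms V_continuous V_locally_strict
    pref_of_subset_if_rationalizes_all[OF experiments_B choice_seq_c, of v w]
    pref_of_subset_if_rationalizes_all[OF experiments_B choice_seq_c, of w v]
  unfolding Phi_def by auto

lemma eventually_in_openin:
  assumes u: "\<forall>k. u k \<in> V \<and> weakly_rationalizes (pref_of (u k)) B c k"
    and S: "openin cc_topology S" "{v\<in>V. rationalizes_all B c v} \<subseteq> S"
  shows "\<forall>\<^sub>F k in sequentially. u k \<in> S"
proof -
  have "\<exists>N i. openin cc_topology N \<and> v \<in> N \<and>
      (\<forall>w\<in>N. \<forall>k>i. \<not> weakly_rationalizes (pref_of w) B c k)" if "v \<in> V - S" for v
  proof -
    have "continuous_on UNIV v" "\<not> rationalizes_all B c v" using that S(2) V_continuous by auto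
    then obtain N i where "openin cc_topology N" "v \<in> N"
      "\<forall>w\<in>N. \<forall>k>i. \<not> weakly_rationalizes (pref_of w) B c k"
      by (rule refuting_nbhd[OF choice_seq_c])
    then show ?thesis by blast
  qed
  then obtain N I where N_open: "\<And>v. v \<in> V - S \<Longrightarrow> openin cc_topology (N v)"
    and N_mem: "\<And>v. v \<in> V - S \<Longrightarrow> v \<in> N v"
    and N_refutes: "\<And>v. v \<in> V - S \<Longrightarrow>
      \<forall>w\<in>N v. \<forall>k>I v. \<not> weakly_rationalizes (pref_of w) B c k"
    by metis
  have "openin cc_topology U" if "U \<in> insert S (N ` (V - S))" for U
    using that S(1) N_open by blast
  moreover have "V \<subseteq> \<Union>(insert S (N ` (V - S)))" using N_mem by blast
  ultimately have "\<exists>F. finite F \<and> F \<subseteq> insert S (N ` (V - S)) \<and> V \<subseteq> \<Union>F"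
    by (rule compactinD[OF V_compact])
  then obtain F where F: "finite F" "F \<subseteq> insert S (N ` (V - S))" "V \<subseteq> \<Union>F"
    by blast
  then obtain G where G: "G \<subseteq> V - S" "finite G" "F - {S} = N ` G"
    using finite_subset_image[of "F - {S}" N "V - S"] by blast
  have "\<forall>\<^sub>F k in sequentially. \<forall>v\<in>G. I v < k"
    by (simp add: eventually_ball_finite_distrib[OF G(2)])
  then show ?thesis
  proof (rule eventually_mono)
    fix k assume k: "\<forall>v\<in>G. I v < k"
    have "u k \<notin> N v" if "v \<in> G" for v
      using N_refutes[of v] that G(1) k u by blast
    then have "u k \<notin> \<Union>(F - {S})" using G(3) by auto
    then show "u k \<in> S" using u F(3) by blast
  qed
qed

lemma rationalizes_all_exists:
  assumes "\<forall>k. R k \<in> Phi V \<and> weakly_rationalizes (R k) B c k"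
  shows "\<exists>v\<in>V. rationalizes_all B c v"
proof (rule ccontr)
  obtain u where "\<forall>k. u k \<in> V" "R = (\<lambda>k. pref_of (u k))"
    using assms Phi_seqE[of R V] by blast
  moreover assume "\<not> (\<exists>v\<in>V. rationalizes_all B c v)"
  ultimately have "\<forall>\<^sub>F k in sequentially. u k \<in> {}"
    using assms by (intro eventually_in_openin) auto
  then show False by simp
qed

lemma pref_of_subset_lower_limit:
  assumes u: "\<forall>k. u k \<in> V \<and> weakly_rationalizes (pref_of (u k)) B c k"
    and v: "v \<in> V" "rationalizes_all B c v"
  shows "pref_of v \<subseteq> lower_limit (\<lambda>k. pref_of (u k))"
  unfolding lower_limit_def
proof (intro subsetI CollectI allI impI)
  fix p U assume p: "p \<in> pref_of v" and U: "open U \<and> p \<in> U"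
  have "locally_strict (pref_of v)" using V_locally_strict v(1) unfolding Phi_def by blast
  then obtain x y where "(x, y) \<in> U" "strict_pref (pref_of v) x y"
    using p U unfolding locally_strict_def by (cases p) blast
  then have xy: "(x, y) \<in> U" "v y < v x" by (simp_all add: strict_pref_pref_of_iff)
  let ?S = "{w. continuous_on UNIV w \<and> (\<forall>a\<in>{y}. \<forall>b\<in>{x}. w a < w b)}"
  have "w y < w x" if "w \<in> V" "rationalizes_all B c w" for w
    using rationalizes_all_pref_of_eq[OF that(1) v(1) that(2) v(2)] xy(2)
    by (metis strict_pref_pref_of_iff)
  then have "{w\<in>V. rationalizes_all B c w} \<subseteq> ?S" using V_continuous by auto
  then have "\<forall>\<^sub>F k in sequentially. u k \<in> ?S"
    by (intro eventually_in_openin u openin_cc_topology_less_on_compacts) auto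
  then show "\<forall>\<^sub>F k in sequentially. pref_of (u k) \<inter> U \<noteq> {}"
  proof (rule eventually_mono)
    fix k assume "u k \<in> ?S"
    then have "(x, y) \<in> pref_of (u k)" by (simp add: pref_of_def)
    then show "pref_of (u k) \<inter> U \<noteq> {}" using xy(1) by blast
  qed
qed

lemma upper_limit_subset_pref_of:
  assumes lc: "locally_compact_space (euclidean :: 'a topology)"
    and u: "\<forall>k. u k \<in> V \<and> weakly_rationalizes (pref_of (u k)) B c k"
    and v: "v \<in> V" "rationalizes_all B c v"
  shows "upper_limit (\<lambda>k. pref_of (u k)) \<subseteq> pref_of v"
proof (rule subrelI, rule ccontr)
  fix x y assume xy: "(x, y) \<in> upper_limit (\<lambda>k. pref_of (u k))" "(x, y) \<notin> pref_of v"
  have cv: "continuous_on UNIV v" using V_continuous v(1) by auto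
  have "v x < v y" using xy(2) unfolding pref_of_def by auto
  then obtain t s where ts: "v x < t" "t < s" "s < v y"
    by (meson dense)
  have sublevel: "open {a. v a < r}" "closed {a. v a \<le> r}"
    and superlevel: "open {a. r < v a}" "closed {a. r \<le> v a}" for r
    by (simp_all add: open_Collect_less closed_Collect_le cv)
  have "x \<in> {a. v a < t}" "{a. v a < t} \<subseteq> {a. v a \<le> t}" using ts(1) by auto
  then obtain U K where UK: "open U" "compact K" "x \<in> U" "U \<subseteq> K" "K \<subseteq> {a. v a \<le> t}"
    by (rule locally_compact_nbhd_in_closed[OF lc sublevel(1) _ _ sublevel(2)])
  have "y \<in> {b. s < v b}" "{b. s < v b} \<subseteq> {b. s \<le> v b}" using ts(3) by auto
  then obtain W L where WL: "open W" "compact L" "y \<in> W" "W \<subseteq> L" "L \<subseteq> {b. s \<le> v b}"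
    by (rule locally_compact_nbhd_in_closed[OF lc superlevel(1) _ _ superlevel(2)])
  let ?S = "{w. continuous_on UNIV w \<and> (\<forall>a\<in>K. \<forall>b\<in>L. w a < w b)}"
  have "w a < w b" if "w \<in> V" "rationalizes_all B c w" "a \<in> K" "b \<in> L" for w a b
  proof -
    have "v a \<le> t" "s \<le> v b" using that(3,4) UK(5) WL(5) by auto
    then have "(a, b) \<notin> pref_of v" using ts(2) unfolding pref_of_def by auto
    then show ?thesis
      using rationalizes_all_pref_of_eq[OF that(1) v(1) that(2) v(2)] unfolding pref_of_def by auto
  qed
  then have "{w\<in>V. rationalizes_all B c w} \<subseteq> ?S" using V_continuous by auto
  then have "\<forall>\<^sub>F k in sequentially. u k \<in> ?S"
    by (intro eventually_in_openin u openin_cc_topology_less_on_compacts UK(2) WL(2))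
  then have "\<forall>\<^sub>F k in sequentially. \<not> pref_of (u k) \<inter> (U \<times> W) \<noteq> {}"
    by (rule eventually_mono) (use UK(4) WL(4) in \<open>force simp: pref_of_def\<close>)
  moreover have "\<exists>\<^sub>F k in sequentially. pref_of (u k) \<inter> (U \<times> W) \<noteq> {}"
    using xy(1) UK(1,3) WL(1,3) unfolding upper_limit_def by (auto intro: open_Times)
  ultimately show False by (simp add: frequently_def)
qed

lemma closed_converges_to_rationalization:
  assumes "locally_compact_space (euclidean :: 'a topology)"
    and R: "\<forall>k. R k \<in> Phi V \<and> weakly_rationalizes (R k) B c k"
    and "v \<in> V" "rationalizes_all B c v"
  shows "closed_converges R (pref_of v)"
proof -
  obtain u where "\<forall>k. u k \<in> V" and R_eq: "R = (\<lambda>k. pref_of (u k))"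
    using R Phi_seqE[of R V] by blast
  with R have "\<forall>k. u k \<in> V \<and> weakly_rationalizes (pref_of (u k)) B c k" by auto
  then show ?thesis unfolding R_eq using assms
    by (intro closed_convergesI pref_of_subset_lower_limit upper_limit_subset_pref_of)
qed

end

theorem theorem11:
  fixes B :: "nat \<Rightarrow> 'a::polish_space set"
    and V :: "('a \<Rightarrow> real) set"
    and c :: "'a set \<Rightarrow> 'a set"
    and R :: "nat \<Rightarrow> ('a \<times> 'a) set"
  assumes "locally_compact_space (euclidean :: 'a topology)"
    and "experiments B"
    and "V \<subseteq> {u. continuous_on UNIV u}"
    and "compactin cc_topology V"
    and "\<forall>P\<in>Phi V. locally_strict P"
    and "choice_seq B c"
    and "\<forall>k. R k \<in> Phi V \<and> weakly_rationalizes (R k) B c k"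
  shows "\<exists>Rs\<in>Phi V. closed_converges R Rs \<and>
           (\<forall>R'. (\<forall>k. R' k \<in> Phi V \<and> weakly_rationalizes (R' k) B c k)
                   \<longrightarrow> closed_converges R' Rs)"
proof -
  interpret choice_experiments B c V
    using assms(2-6) by unfold_locales
  obtain v where v: "v \<in> V" "rationalizes_all B c v"
    using rationalizes_all_exists[OF assms(7)] by blast
  then have "pref_of v \<in> Phi V" unfolding Phi_def by blast
  then show ?thesis
    using closed_converges_to_rationalization[OF assms(1) _ v] assms(7) by blast
qed

end
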